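(* Let $G$, $P$, $w$ be as in the context and let $s,t\in V$, $s\ne t$, with at least one directed path from $s$ to $t$ in $G$. For $m\in V\setminus\{t\}$ consider $\lim_{\alpha\to0^+}F^{\{t,\overline{o}\}}_{sm}(\alpha)$ in the evaporating network $G_\alpha$. Then: (a) if $\lim_{\alpha\to0^+}F^{\{t,\overline{o}\}}_{sm}(\alpha)=0$, no shortest (minimum-cost) path from $s$ to $t$ passes through $m$; (b) if $\lim_{\alpha\to0^+}F^{\{t,\overline{o}\}}_{sm}(\alpha)=1$, $m$ lies on every shortest path from $s$ to $t$; (c) if $0<\lim_{\alpha\to0^+}F^{\{t,\overline{o}\}}_{sm}(\alpha)<1$, $m$ lies on at least one but not all shortest paths from $s$ to $t$; (d) there is more than one shortest path from $s$ to $t$ if and only if there exists $m$ with $0<\lim_{\alpha\to0^+}F^{\{t,\overline{o}\}}_{sm}(\alpha)<1$.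
   Context: $G=(V,E)$ is a finite directed graph; each edge $e_{ij}\in E$ has a positive cost $w_{ij}$. $P$ is a row-stochastic transition matrix with $P_{ij}>0$ iff $e_{ij}\in E$. Shortest paths are directed paths of minimum total cost. Evaporating network $G_\alpha$ ($0<\alpha<1$): Markov chain on $V\cup\{o\}$ with $P_{ij}(\alpha)=P_{ij}\alpha^{w_{ij}}$ ($i,j\in V$), $P_{io}(\alpha)=1-\sum_jP_{ij}\alpha^{w_{ij}}$, $o$ absorbing. Making $t$ and $o$ absorbing, with $\mathcal T=V\setminus\{t\}$, let $Q_x^{\{t,\overline o\}}(\alpha)$ be the probability that the chain from $x$ is absorbed at $t$, and $F^{\{t,o\}}(\alpha)=(I-P(\alpha)_{\mathcal T\mathcal T})^{-1}$. The avoidance fundamental matrix is $F^{\{t,\overline{o}\}}_{sm}(\alpha)=F^{\{t,o\}}_{sm}(\alpha)\,Q_m^{\{t,\overline o\}}(\alpha)/Q_s^{\{t,\overline o\}}(\alpha)$ for $s,m\in\mathcal T$ (the expected number of visits to $m$ from $s$ conditioned on absorption at $t$). *)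

theory Defs
  imports "HOL-Analysis.Analysis"
begin

definition Palpha :: "('v \<Rightarrow> 'v \<Rightarrow> real) \<Rightarrow> ('v \<Rightarrow> 'v \<Rightarrow> real) \<Rightarrow> real \<Rightarrow> 'v \<Rightarrow> 'v \<Rightarrow> real" where
  "Palpha P w \<alpha> i j = P i j * \<alpha> powr (w i j)"

text \<open>Transient block P(alpha)_TT, embedded into a 'v x 'v matrix with zero row/column at t.\<close>
definition Mtrans :: "('v::finite \<Rightarrow> 'v \<Rightarrow> real) \<Rightarrow> ('v \<Rightarrow> 'v \<Rightarrow> real) \<Rightarrow> 'v \<Rightarrow> real \<Rightarrow> real^'v^'v" where
  "Mtrans P w t \<alpha> = (\<chi> i j. if i \<noteq> t \<and> j \<noteq> t then Palpha P w \<alpha> i j else 0)"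

text \<open>Fundamental matrix F^{t,o}(alpha) = (I - P(alpha)_TT)^{-1} (entries for s,m distinct from t).\<close>
definition Fto :: "('v::finite \<Rightarrow> 'v \<Rightarrow> real) \<Rightarrow> ('v \<Rightarrow> 'v \<Rightarrow> real) \<Rightarrow> 'v \<Rightarrow> real \<Rightarrow> 'v \<Rightarrow> 'v \<Rightarrow> real" where
  "Fto P w t \<alpha> s m = matrix_inv (mat 1 - Mtrans P w t \<alpha>) $ s $ m"

text \<open>Absorption probability at t starting from x (x distinct from t): (F R)_{x t}.\<close>
definition Qabs :: "('v::finite \<Rightarrow> 'v \<Rightarrow> real) \<Rightarrow> ('v \<Rightarrow> 'v \<Rightarrow> real) \<Rightarrow> 'v \<Rightarrow> real \<Rightarrow> 'v \<Rightarrow> real" where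
  "Qabs P w t \<alpha> x = (\<Sum>m\<in>UNIV - {t}. Fto P w t \<alpha> x m * Palpha P w \<alpha> m t)"

definition Favoid :: "('v::finite \<Rightarrow> 'v \<Rightarrow> real) \<Rightarrow> ('v \<Rightarrow> 'v \<Rightarrow> real) \<Rightarrow> 'v \<Rightarrow> real \<Rightarrow> 'v \<Rightarrow> 'v \<Rightarrow> real" where
  "Favoid P w t \<alpha> s m = Fto P w t \<alpha> s m * Qabs P w t \<alpha> m / Qabs P w t \<alpha> s"

definition is_path :: "('v \<times> 'v) set \<Rightarrow> 'v \<Rightarrow> 'v \<Rightarrow> 'v list \<Rightarrow> bool" where
  "is_path E s t xs \<longleftrightarrow> xs \<noteq> [] \<and> hd xs = s \<and> last xs = t \<and> distinct xs \<and>
     successively (\<lambda>a b. (a, b) \<in> E) xs"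

definition path_cost :: "('v \<Rightarrow> 'v \<Rightarrow> real) \<Rightarrow> 'v list \<Rightarrow> real" where
  "path_cost w xs = sum_list (map (\<lambda>(a, b). w a b) (zip xs (tl xs)))"

definition shortest_path :: "('v \<times> 'v) set \<Rightarrow> ('v \<Rightarrow> 'v \<Rightarrow> real) \<Rightarrow> 'v \<Rightarrow> 'v \<Rightarrow> 'v list \<Rightarrow> bool" where
  "shortest_path E w s t xs \<longleftrightarrow> is_path E s t xs \<and>
     (\<forall>ys. is_path E s t ys \<longrightarrow> path_cost w xs \<le> path_cost w ys)"

end

theory Submission
  imports Defs
begin

text \<open>
  Let D be the cost of a shortest s-t path and M(\<alpha>) the transient block of P(\<alpha>). Every row of
  M(\<alpha>) sums to at most \<alpha>^w_min, so F(\<alpha>) = (I - M(\<alpha>))^-1 agrees with the truncated Neumann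
  series \<Sum>k<K. M(\<alpha>)^k up to O(\<alpha>^(K w_min)), and the entries of M(\<alpha>)^k are sums over vertex
  sequences of their P-weight times \<alpha>^cost. Hence \<alpha>^-D F_sm(\<alpha>) Q_m(\<alpha>) =
  \<alpha>^-D \<Sum>z. F_sm(\<alpha>) F_mz(\<alpha>) P_zt(\<alpha>) is, up to o(1), a finite sum of terms c \<alpha>^(cost - D) over
  s-t walks through m. Nonzero terms have cost at least D, and the walks of cost exactly D are the
  shortest paths because weights are positive, so the sum tends to the total P-weight A(m) of the
  shortest paths through m. As F_ss(\<alpha>) tends to 1, the avoidance fundamental matrix entry tends to
  A(m)/A(s), and A(s) weighs all shortest paths: the limit is 0 iff no shortest path visits m, and 1
  iff all of them do. Finally, distinct shortest paths have distinct vertex sets, since the distance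
  from s strictly increases along a shortest path.
\<close>

section \<open>Walks and shortest paths\<close>

definition edges :: "'a list \<Rightarrow> ('a \<times> 'a) list" where
  "edges xs = zip xs (tl xs)"

lemma edges_simps [simp]:
  "edges [] = []" "edges [x] = []" "edges (x # y # ys) = (x, y) # edges (y # ys)"
  by (simp_all add: edges_def)

lemma edges_append_tl:
  assumes "xs \<noteq> []" "last xs = hd ys"
  shows "edges (xs @ tl ys) = edges xs @ edges ys"
  using assms
proof (induction xs rule: induct_list012)
  case (2 x)
  then show ?case by (cases ys; cases "tl ys") auto
qed simp_all

definition edge_prod :: "('a \<Rightarrow> 'a \<Rightarrow> 'b::comm_monoid_mult) \<Rightarrow> 'a list \<Rightarrow> 'b" where
  "edge_prod f xs = prod_list (map (\<lambda>(a, b). f a b) (edges xs))"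

lemma edge_prod_simps [simp]:
  "edge_prod f [] = 1" "edge_prod f [x] = 1" "edge_prod f (x # y # ys) = f x y * edge_prod f (y # ys)"
  by (simp_all add: edge_prod_def)

lemma path_cost_edges: "path_cost w xs = sum_list (map (\<lambda>(a, b). w a b) (edges xs))"
  by (simp add: path_cost_def edges_def)

lemma path_cost_simps [simp]:
  "path_cost w [] = 0" "path_cost w [x] = 0" "path_cost w (x # y # ys) = w x y + path_cost w (y # ys)"
  by (simp_all add: path_cost_edges)

lemma path_cost_append_tl:
  "xs \<noteq> [] \<Longrightarrow> last xs = hd ys \<Longrightarrow> path_cost w (xs @ tl ys) = path_cost w xs + path_cost w ys"
  by (simp add: path_cost_edges edges_append_tl)

lemma path_cost_split: "path_cost w (xs @ v # ys) = path_cost w (xs @ [v]) + path_cost w (v # ys)"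
  using path_cost_append_tl[of "xs @ [v]" "v # ys"] by simp

definition is_walk :: "('v \<times> 'v) set \<Rightarrow> 'v \<Rightarrow> 'v \<Rightarrow> 'v list \<Rightarrow> bool" where
  "is_walk E a b xs \<longleftrightarrow> xs \<noteq> [] \<and> hd xs = a \<and> last xs = b \<and> successively (\<lambda>x y. (x, y) \<in> E) xs"

lemma is_path_iff_walk: "is_path E a b xs \<longleftrightarrow> is_walk E a b xs \<and> distinct xs"
  by (auto simp: is_path_def is_walk_def)

lemma is_walk_append_tl:
  "is_walk E a v xs \<Longrightarrow> is_walk E v b ys \<Longrightarrow> is_walk E a b (xs @ tl ys)"
  by (cases ys; cases "tl ys") (auto simp: is_walk_def successively_append_iff)

lemma is_walk_split:
  "is_walk E a b (xs @ v # ys) \<Longrightarrow> is_walk E a v (xs @ [v]) \<and> is_walk E v b (v # ys)"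
  by (cases ys) (auto simp: is_walk_def successively_append_iff hd_append)

lemma finite_paths: "finite {p. is_path E a b (p :: 'v::finite list)}"
proof (rule finite_subset)
  show "{p. is_path E a b p} \<subseteq> {xs. set xs \<subseteq> UNIV \<and> length xs \<le> CARD('v)}"
  proof clarsimp
    fix p assume "is_path E a b p"
    then have "length p = card (set p)" by (simp add: is_path_def distinct_card)
    also have "\<dots> \<le> CARD('v)" by (rule card_mono) auto
    finally show "length p \<le> CARD('v)" .
  qed
qed (rule finite_lists_length_le, simp)

locale pos_weighted_digraph =
  fixes E :: "('v::finite \<times> 'v) set" and w :: "'v \<Rightarrow> 'v \<Rightarrow> real"
  assumes w_pos: "\<And>i j. (i, j) \<in> E \<Longrightarrow> w i j > 0"
begin

lemma path_cost_nonneg: "successively (\<lambda>x y. (x, y) \<in> E) xs \<Longrightarrow> 0 \<le> path_cost w xs"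
  by (induction xs rule: induct_list012) (auto intro: add_nonneg_nonneg less_imp_le w_pos)

lemma path_cost_pos:
  assumes "successively (\<lambda>x y. (x, y) \<in> E) xs" "2 \<le> length xs"
  shows "0 < path_cost w xs"
proof -
  obtain x y ys where "xs = x # y # ys"
    using assms(2) by (cases xs; cases "tl xs") auto
  with assms(1) show ?thesis using path_cost_nonneg[of "y # ys"] w_pos[of x y] by simp
qed

lemma walk_shortcut:
  "is_walk E a b xs \<Longrightarrow> \<exists>p. is_path E a b p \<and> path_cost w p \<le> path_cost w xs \<and>
     (\<not> distinct xs \<longrightarrow> path_cost w p < path_cost w xs)"
proof (induction "length xs" arbitrary: xs rule: less_induct)
  case less
  show ?case
  proof (cases "distinct xs")
    case True
    with less.prems show ?thesis by (auto simp: is_path_iff_walk)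
  next
    case False
    then obtain as y bs cs where xs: "xs = as @ y # (bs @ y # cs)"
      using not_distinct_decomp by fastforce
    have "is_walk E a y (as @ [y])" "is_walk E y y (y # bs @ [y])" "is_walk E y b (y # cs)"
      using less.prems is_walk_split[of E a b as y "bs @ y # cs"]
        is_walk_split[of E y b "y # bs" y cs] unfolding xs by auto
    then have short: "is_walk E a b (as @ y # cs)" and cycle: "0 < path_cost w (y # bs @ [y])"
      using is_walk_append_tl[of E a y "as @ [y]" b "y # cs"]
      by (auto simp: is_walk_def intro!: path_cost_pos)
    have "path_cost w xs = path_cost w (as @ y # cs) + path_cost w (y # bs @ [y])"
      using path_cost_split[of w as y "bs @ y # cs"] path_cost_split[of w "y # bs" y cs]
        path_cost_split[of w as y cs] unfolding xs by simp
    moreover obtain p where "is_path E a b p" "path_cost w p \<le> path_cost w (as @ y # cs)"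
      using less.hyps[OF _ short] xs by auto
    ultimately show ?thesis using cycle by (intro exI[of _ p]) auto
  qed
qed

definition sp_dist :: "'v \<Rightarrow> 'v \<Rightarrow> real" where
  "sp_dist a b = Min (path_cost w ` {p. is_path E a b p})"

lemma sp_dist_le_path: "is_path E a b p \<Longrightarrow> sp_dist a b \<le> path_cost w p"
  unfolding sp_dist_def by (rule Min_le) (auto intro: finite_paths)

lemma sp_dist_le_walk:
  assumes "is_walk E a b xs"
  shows "sp_dist a b \<le> path_cost w xs"
    and "\<not> distinct xs \<Longrightarrow> sp_dist a b < path_cost w xs"
proof -
  obtain p where "is_path E a b p" "path_cost w p \<le> path_cost w xs"
    and "\<not> distinct xs \<Longrightarrow> path_cost w p < path_cost w xs"
    using walk_shortcut[OF assms] by blast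
  then show "sp_dist a b \<le> path_cost w xs" "\<not> distinct xs \<Longrightarrow> sp_dist a b < path_cost w xs"
    using sp_dist_le_path[of a b p] by linarith+
qed

lemma sp_dist_attained:
  assumes "is_walk E a b xs"
  obtains p where "is_path E a b p" "path_cost w p = sp_dist a b"
proof -
  have "{p. is_path E a b p} \<noteq> {}"
    using walk_shortcut[OF assms] by blast
  then have "sp_dist a b \<in> path_cost w ` {p. is_path E a b p}"
    unfolding sp_dist_def by (intro Min_in finite_imageI finite_paths) auto
  then obtain p where "p \<in> {p. is_path E a b p}" "sp_dist a b = path_cost w p"
    by (rule imageE)
  then show ?thesis using that by simp
qed

lemma shortest_path_iff: "shortest_path E w a b p \<longleftrightarrow> is_walk E a b p \<and> path_cost w p = sp_dist a b"
proof
  assume sp: "shortest_path E w a b p"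
  then have "is_walk E a b p" by (simp add: shortest_path_def is_path_iff_walk)
  then obtain q where "is_path E a b q" "path_cost w q = sp_dist a b"
    by (rule sp_dist_attained)
  moreover have "path_cost w p \<le> path_cost w q"
    using sp \<open>is_path E a b q\<close> by (simp add: shortest_path_def)
  ultimately show "is_walk E a b p \<and> path_cost w p = sp_dist a b"
    using sp_dist_le_walk(1)[of a b p] \<open>is_walk E a b p\<close> by simp
next
  assume "is_walk E a b p \<and> path_cost w p = sp_dist a b"
  then show "shortest_path E w a b p"
    using sp_dist_le_walk(2)[of a b p] sp_dist_le_path
    by (auto simp: shortest_path_def is_path_iff_walk)
qed

lemma shortest_path_exists:
  assumes "is_walk E a b xs"
  shows "\<exists>p. shortest_path E w a b p"
proof -
  obtain p where "is_path E a b p" "path_cost w p = sp_dist a b"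
    using assms by (rule sp_dist_attained)
  then show ?thesis by (auto simp: shortest_path_iff is_path_iff_walk)
qed

lemma shortest_path_prefix:
  assumes "shortest_path E w a b (xs @ v # ys)"
  shows "shortest_path E w a v (xs @ [v])"
proof -
  have walk: "is_walk E a b (xs @ v # ys)" and cost: "path_cost w (xs @ v # ys) = sp_dist a b"
    using assms by (auto simp: shortest_path_iff)
  have prefix: "is_walk E a v (xs @ [v])" and suffix: "is_walk E v b (v # ys)"
    using is_walk_split[OF walk] by auto
  obtain q where q: "is_path E a v q" "path_cost w q = sp_dist a v"
    using prefix by (rule sp_dist_attained)
  then have "is_walk E a b (q @ tl (v # ys))"
    using suffix by (intro is_walk_append_tl) (auto simp: is_path_iff_walk)
  then have "sp_dist a b \<le> path_cost w (q @ tl (v # ys))"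
    by (rule sp_dist_le_walk(1))
  also have "\<dots> = sp_dist a v + path_cost w (v # ys)"
    using q by (subst path_cost_append_tl) (auto simp: is_path_def)
  finally have "path_cost w (xs @ [v]) \<le> sp_dist a v"
    using cost path_cost_split[of w xs v ys] by simp
  then show ?thesis
    using prefix sp_dist_le_walk(1)[OF prefix] by (simp add: shortest_path_iff)
qed

lemma shortest_path_sp_dist_increasing:
  "shortest_path E w a b p \<Longrightarrow> successively (\<lambda>u v. sp_dist a u < sp_dist a v) p"
proof (induction p arbitrary: b rule: rev_induct)
  case (snoc v q)
  show ?case
  proof (cases q rule: rev_cases)
    case (snoc xs u)
    have "shortest_path E w a u q"
      using shortest_path_prefix[of a b xs u "[v]"] snoc.prems \<open>q = xs @ [u]\<close> by simp
    then have IH: "successively (\<lambda>u v. sp_dist a u < sp_dist a v) q"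
      and dist_u: "sp_dist a u = path_cost w q"
      using snoc.IH by (auto simp: shortest_path_iff)
    have "shortest_path E w a v (q @ [v])"
      using shortest_path_prefix[of a b q v "[]"] snoc.prems by simp
    then have "(u, v) \<in> E" and "sp_dist a v = path_cost w (q @ [v])"
      using \<open>q = xs @ [u]\<close> by (auto simp: shortest_path_iff is_walk_def successively_append_iff)
    moreover have "path_cost w (q @ [v]) = path_cost w q + w u v"
      using path_cost_append_tl[of q "[u, v]"] \<open>q = xs @ [u]\<close> by simp
    ultimately have "sp_dist a u < sp_dist a v"
      using dist_u w_pos by simp
    with IH show ?thesis
      using \<open>q = xs @ [u]\<close> by (simp add: successively_append_iff)
  qed simp
qed simp

text \<open>Along a shortest path the distance from a strictly increases, so the path is its vertex set
  sorted by that distance.\<close>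

lemma shortest_path_eq_if_same_set:
  assumes p: "shortest_path E w a b p" and q: "shortest_path E w a b q" and same: "set p = set q"
  shows "p = q"
proof -
  have "sorted_wrt (<) (map (sp_dist a) r)" if "shortest_path E w a b r" for r
    using shortest_path_sp_dist_increasing[OF that]
    by (simp add: successively_map successively_conv_sorted_wrt[symmetric])
  from this[OF p] this[OF q] show ?thesis
    using same by (intro map_sorted_distinct_set_unique[of "sp_dist a"])
      (auto simp: strict_sorted_iff distinct_map)
qed

lemma shortest_paths_not_unique_iff:
  "(\<exists>p q. shortest_path E w a b p \<and> shortest_path E w a b q \<and> p \<noteq> q) \<longleftrightarrow>
   (\<exists>m. m \<noteq> b \<and> (\<exists>p. shortest_path E w a b p \<and> m \<in> set p) \<and> (\<exists>p. shortest_path E w a b p \<and> m \<notin> set p))"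
proof
  assume "\<exists>p q. shortest_path E w a b p \<and> shortest_path E w a b q \<and> p \<noteq> q"
  then obtain p q where sp: "shortest_path E w a b p" "shortest_path E w a b q" and "p \<noteq> q"
    by blast
  then have "set p \<noteq> set q"
    using shortest_path_eq_if_same_set by blast
  then obtain m where m: "m \<in> set p \<and> m \<notin> set q \<or> m \<in> set q \<and> m \<notin> set p"
    by blast
  moreover have "b \<in> set p" "b \<in> set q"
    using sp by (metis last_in_set is_path_def shortest_path_def)+
  ultimately show "\<exists>m. m \<noteq> b \<and> (\<exists>p. shortest_path E w a b p \<and> m \<in> set p) \<and>
      (\<exists>p. shortest_path E w a b p \<and> m \<notin> set p)"
    using sp by (intro exI[of _ m]) auto
next
  assume "\<exists>m. m \<noteq> b \<and> (\<exists>p. shortest_path E w a b p \<and> m \<in> set p) \<and>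
      (\<exists>p. shortest_path E w a b p \<and> m \<notin> set p)"
  then obtain m p q where "shortest_path E w a b p" "m \<in> set p" "shortest_path E w a b q" "m \<notin> set q"
    by blast
  then show "\<exists>p q. shortest_path E w a b p \<and> shortest_path E w a b q \<and> p \<noteq> q"
    by blast
qed

end

section \<open>Powers and Neumann series of substochastic matrices\<close>

primrec matpow :: "'a::semiring_1^'n^'n \<Rightarrow> nat \<Rightarrow> 'a^'n^'n" where
  "matpow A 0 = mat 1"
| "matpow A (Suc k) = A ** matpow A k"

definition vertex_seqs :: "nat \<Rightarrow> 'a \<Rightarrow> 'a \<Rightarrow> 'a list set" where
  "vertex_seqs k x y = {xs. length xs = Suc k \<and> hd xs = x \<and> last xs = y}"

lemma finite_vertex_seqs: "finite (vertex_seqs k x (y :: 'a::finite))"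
proof (rule finite_subset)
  show "vertex_seqs k x y \<subseteq> {xs. set xs \<subseteq> UNIV \<and> length xs = Suc k}"
    by (auto simp: vertex_seqs_def)
qed (rule finite_lists_length_eq, simp)

lemma vertex_seqs_Suc: "vertex_seqs (Suc k) x y = (\<Union>z. (#) x ` vertex_seqs k z y)"
proof (intro equalityI subsetI)
  fix xs assume "xs \<in> vertex_seqs (Suc k) x y"
  then obtain ys where "xs = x # ys" "ys \<in> vertex_seqs k (hd ys) y"
    unfolding vertex_seqs_def by (cases xs; cases "tl xs") auto
  then show "xs \<in> (\<Union>z. (#) x ` vertex_seqs k z y)" by blast
qed (auto simp: vertex_seqs_def)

lemma matpow_entry:
  fixes A :: "'a::comm_semiring_1^'n^'n"
  shows "matpow A k $ x $ y = (\<Sum>xs\<in>vertex_seqs k x y. edge_prod (\<lambda>a b. A $ a $ b) xs)"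
proof (induction k arbitrary: x)
  case 0
  have "vertex_seqs 0 x y = (if x = y then {[x]} else {})"
    by (auto simp: vertex_seqs_def length_Suc_conv)
  then show ?case by (simp add: mat_def)
next
  case (Suc k)
  have "(\<Sum>xs\<in>vertex_seqs (Suc k) x y. edge_prod (\<lambda>a b. A $ a $ b) xs) =
      (\<Sum>z\<in>UNIV. \<Sum>ys\<in>vertex_seqs k z y. edge_prod (\<lambda>a b. A $ a $ b) (x # ys))"
    unfolding vertex_seqs_Suc
    by (subst sum.UNION_disjoint) (auto simp: finite_vertex_seqs sum.reindex, auto simp: vertex_seqs_def)
  also have "\<dots> = (\<Sum>z\<in>UNIV. A $ x $ z * matpow A k $ z $ y)"
  proof (intro sum.cong refl)
    fix z
    have "edge_prod (\<lambda>a b. A $ a $ b) (x # ys) = A $ x $ z * edge_prod (\<lambda>a b. A $ a $ b) ys"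
      if "ys \<in> vertex_seqs k z y" for ys
      using that by (cases ys) (auto simp: vertex_seqs_def)
    then show "(\<Sum>ys\<in>vertex_seqs k z y. edge_prod (\<lambda>a b. A $ a $ b) (x # ys)) =
        A $ x $ z * matpow A k $ z $ y"
      by (simp add: Suc.IH sum_distrib_left)
  qed
  finally show ?case by (simp add: matrix_matrix_mult_def)
qed

definition vertex_seqs_upto :: "nat \<Rightarrow> 'a \<Rightarrow> 'a \<Rightarrow> 'a list set" where
  "vertex_seqs_upto K x y = {xs. xs \<noteq> [] \<and> length xs \<le> K \<and> hd xs = x \<and> last xs = y}"

lemma vertex_seqs_upto_eq_UN: "vertex_seqs_upto K x y = (\<Union>k<K. vertex_seqs k x y)"
proof (intro equalityI subsetI)
  fix xs assume "xs \<in> vertex_seqs_upto K x y"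
  then show "xs \<in> (\<Union>k<K. vertex_seqs k x y)"
    by (cases xs) (auto simp: vertex_seqs_upto_def vertex_seqs_def)
qed (auto simp: vertex_seqs_upto_def vertex_seqs_def)

lemma finite_vertex_seqs_upto: "finite (vertex_seqs_upto K x (y :: 'a::finite))"
  by (simp add: vertex_seqs_upto_eq_UN finite_vertex_seqs)

lemma sum_matpow_entry:
  fixes A :: "'a::comm_semiring_1^'n^'n"
  shows "(\<Sum>k<K. matpow A k) $ x $ y = (\<Sum>xs\<in>vertex_seqs_upto K x y. edge_prod (\<lambda>a b. A $ a $ b) xs)"
  unfolding vertex_seqs_upto_eq_UN
  by (subst sum.UNION_disjoint) (auto simp: finite_vertex_seqs matpow_entry, auto simp: vertex_seqs_def)

lemma matrix_diff_rdistrib: "(A - B) ** C = A ** C - B ** (C :: 'a::ring_1^'n^'m)"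
  by (simp add: matrix_matrix_mult_def vec_eq_iff left_diff_distrib sum_subtractf)

lemma invertible_matrix_inv:
  assumes "invertible A"
  shows "A ** matrix_inv A = mat 1" "matrix_inv A ** A = mat 1"
proof -
  have "\<exists>A'. A ** A' = mat 1 \<and> A' ** A = mat 1"
    using assms unfolding invertible_def .
  then have "A ** matrix_inv A = mat 1 \<and> matrix_inv A ** A = mat 1"
    unfolding matrix_inv_def by (rule someI_ex)
  then show "A ** matrix_inv A = mat 1" "matrix_inv A ** A = mat 1" by auto
qed

lemma matrix_inv_neumann:
  fixes A :: "'a::field^'n^'n"
  assumes "invertible (mat 1 - A)"
  shows "matrix_inv (mat 1 - A) = (\<Sum>k<K. matpow A k) + matrix_inv (mat 1 - A) ** matpow A K"
proof (induction K)
  case (Suc K)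
  let ?F = "matrix_inv (mat 1 - A)"
  have "(mat 1 - A) ** matpow A K + A ** matpow A K = matpow A K"
    by (simp add: matrix_diff_rdistrib)
  then have "?F ** matpow A K = ?F ** ((mat 1 - A) ** matpow A K) + ?F ** (A ** matpow A K)"
    by (metis matrix_add_ldistrib)
  also have "\<dots> = (?F ** (mat 1 - A)) ** matpow A K + ?F ** matpow A (Suc K)"
    by (simp add: matrix_mul_assoc)
  finally have "?F ** matpow A K = matpow A K + ?F ** matpow A (Suc K)"
    using invertible_matrix_inv(2)[OF assms] by simp
  with Suc show ?case by (simp add: add.assoc)
qed simp

locale substochastic_matrix =
  fixes A :: "real^'n^'n" and \<rho> :: real
  assumes nonneg: "\<And>i j. 0 \<le> A $ i $ j"
    and row_sum_le: "\<And>i. (\<Sum>j\<in>UNIV. A $ i $ j) \<le> \<rho>"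
    and less_1: "\<rho> < 1"
begin

lemma bound_nonneg: "0 \<le> \<rho>"
  using row_sum_le[of undefined] sum_nonneg[of UNIV "\<lambda>j. A $ undefined $ j"] nonneg by force

lemma solution_bound:
  assumes bound: "\<And>i. \<bar>((mat 1 - A) *v x) $ i\<bar> \<le> c"
  shows "\<bar>x $ i\<bar> \<le> c / (1 - \<rho>)"
proof -
  \<comment> \<open>maximum principle: evaluate the equation at a coordinate where \<bar>x $ i\<bar> is largest\<close>
  define \<mu> where "\<mu> = Max (range (\<lambda>j. \<bar>x $ j\<bar>))"
  have le_\<mu>: "\<bar>x $ j\<bar> \<le> \<mu>" for j
    unfolding \<mu>_def by (rule Max_ge) auto
  have "\<mu> \<in> range (\<lambda>j. \<bar>x $ j\<bar>)"
    unfolding \<mu>_def by (rule Max_in) auto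
  then obtain i0 where i0: "\<mu> = \<bar>x $ i0\<bar>" by blast
  have "x $ i0 = ((mat 1 - A) *v x) $ i0 + (\<Sum>j\<in>UNIV. A $ i0 $ j * x $ j)"
    by (simp add: matrix_vector_mult_diff_rdistrib matrix_vector_mult_def[of A])
  moreover have "\<bar>\<Sum>j\<in>UNIV. A $ i0 $ j * x $ j\<bar> \<le> (\<Sum>j\<in>UNIV. A $ i0 $ j * \<mu>)"
    by (rule order_trans[OF sum_abs sum_mono]) (simp add: abs_mult nonneg le_\<mu> mult_left_mono)
  ultimately have "\<mu> \<le> c + (\<Sum>j\<in>UNIV. A $ i0 $ j * \<mu>)"
    using i0 bound[of i0] abs_triangle_ineq[of "((mat 1 - A) *v x) $ i0"] by linarith
  also have "\<dots> \<le> c + \<rho> * \<mu>"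
    using row_sum_le[of i0] le_\<mu>[of i0] by (simp add: sum_distrib_right[symmetric] mult_right_mono)
  finally have "\<mu> \<le> c / (1 - \<rho>)"
    using less_1 by (simp add: field_simps)
  then show ?thesis using le_\<mu>[of i] by simp
qed

lemma invertible: "invertible (mat 1 - A)"
proof -
  have "x = 0" if "(mat 1 - A) *v x = 0" for x :: "real^'n"
    using solution_bound[where c = 0 and x = x] that by (simp add: vec_eq_iff)
  then show ?thesis
    using matrix_left_invertible_ker invertible_left_inverse by blast
qed

lemma inverse_bound: "\<bar>matrix_inv (mat 1 - A) $ i $ j\<bar> \<le> 1 / (1 - \<rho>)"
proof -
  let ?x = "matrix_inv (mat 1 - A) *v axis j 1"
  have "(mat 1 - A) *v ?x = axis j 1"
    by (simp add: matrix_vector_mul_assoc invertible_matrix_inv(1)[OF invertible])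
  then have "\<bar>?x $ i\<bar> \<le> 1 / (1 - \<rho>)"
    by (intro solution_bound) (simp add: axis_def)
  then show ?thesis
    by (simp add: matrix_vector_mult_basis column_def)
qed

lemma matpow_bound: "0 \<le> matpow A k $ x $ y \<and> matpow A k $ x $ y \<le> \<rho> ^ k"
proof (induction k arbitrary: x)
  case 0
  then show ?case by (simp add: mat_def)
next
  case (Suc k)
  have "matpow A (Suc k) $ x $ y = (\<Sum>z\<in>UNIV. A $ x $ z * matpow A k $ z $ y)"
    by (simp add: matrix_matrix_mult_def)
  moreover have "(\<Sum>z\<in>UNIV. A $ x $ z * matpow A k $ z $ y) \<le> (\<Sum>z\<in>UNIV. A $ x $ z) * \<rho> ^ k"
    unfolding sum_distrib_right by (intro sum_mono mult_left_mono) (use Suc.IH nonneg in auto)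
  moreover have "(\<Sum>z\<in>UNIV. A $ x $ z) * \<rho> ^ k \<le> \<rho> * \<rho> ^ k"
    using row_sum_le bound_nonneg by (intro mult_right_mono) auto
  ultimately show ?case
    using Suc.IH nonneg by (auto intro!: sum_nonneg)
qed

lemma neumann_remainder_bound:
  "\<bar>(matrix_inv (mat 1 - A) ** matpow A K) $ x $ y\<bar> \<le> CARD('n) / (1 - \<rho>) * \<rho> ^ K"
proof -
  have "\<bar>(matrix_inv (mat 1 - A) ** matpow A K) $ x $ y\<bar>
      \<le> (\<Sum>z\<in>UNIV. \<bar>matrix_inv (mat 1 - A) $ x $ z\<bar> * matpow A K $ z $ y)"
    unfolding matrix_matrix_mult_def using matpow_bound
    by (auto intro!: order_trans[OF sum_abs] sum_mono simp: abs_mult)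
  also have "\<dots> \<le> (\<Sum>z\<in>(UNIV::'n set). 1 / (1 - \<rho>) * \<rho> ^ K)"
    using inverse_bound matpow_bound less_1 by (intro sum_mono mult_mono) auto
  finally show ?thesis by simp
qed

end

section \<open>Sums of powers of \<alpha> as \<alpha> tends to 0\<close>

lemma eventually_at_right_0_pos: "\<forall>\<^sub>F \<alpha> in at_right (0::real). 0 < \<alpha>"
  by (rule eventually_at_right_less)

lemma tendsto_powr_at_right_0:
  assumes "0 < e"
  shows "((\<lambda>\<alpha>. \<alpha> powr e) \<longlongrightarrow> (0::real)) (at_right 0)"
proof (rule tendsto_zero_powrI[of "\<lambda>\<alpha>. \<alpha>" _ "\<lambda>_. e" e])
  show "\<forall>\<^sub>F \<alpha> in at_right (0::real). 0 \<le> \<alpha>"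
    by (rule eventually_mono[OF eventually_at_right_0_pos]) simp
qed (use assms in auto)

lemma tendsto_0_if_powr_bound:
  assumes "0 < e" "\<forall>\<^sub>F \<alpha> in at_right 0. \<bar>f \<alpha>\<bar> \<le> C * \<alpha> powr e"
  shows "(f \<longlongrightarrow> (0::real)) (at_right 0)"
proof (rule Lim_null_comparison)
  show "\<forall>\<^sub>F \<alpha> in at_right 0. norm (f \<alpha>) \<le> C * \<alpha> powr e"
    using assms(2) by simp
  show "((\<lambda>\<alpha>. C * \<alpha> powr e) \<longlongrightarrow> 0) (at_right 0)"
    using tendsto_mult_right_zero[OF tendsto_powr_at_right_0[OF assms(1)]] .
qed

lemma tendsto_sum_powr_leading:
  fixes c e :: "'a \<Rightarrow> real"
  assumes "finite I" and ge: "\<And>i. i \<in> I \<Longrightarrow> c i \<noteq> 0 \<Longrightarrow> d \<le> e i"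
  shows "((\<lambda>\<alpha>. \<Sum>i\<in>I. c i * \<alpha> powr (e i - d)) \<longlongrightarrow> (\<Sum>i\<in>{i\<in>I. e i = d}. c i)) (at_right 0)"
  unfolding sum.inter_filter[OF assms(1)]
proof (rule tendsto_sum)
  fix i assume "i \<in> I"
  show "((\<lambda>\<alpha>. c i * \<alpha> powr (e i - d)) \<longlongrightarrow> (if e i = d then c i else 0)) (at_right 0)"
  proof (cases "c i \<noteq> 0 \<and> e i \<noteq> d")
    case True
    then have "0 < e i - d" using ge[OF \<open>i \<in> I\<close>] by simp
    with True show ?thesis
      using tendsto_mult_right_zero[OF tendsto_powr_at_right_0] by auto
  next
    case False
    then have "c i * \<alpha> powr (e i - d) = (if e i = d then c i else 0)" if "0 < \<alpha>" for \<alpha>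
      using that by auto
    then show ?thesis
      by (intro tendsto_eventually eventually_mono[OF eventually_at_right_0_pos])
  qed
qed

section \<open>The evaporating network\<close>

locale evaporating_network = pos_weighted_digraph E w
  for E :: "('v::finite \<times> 'v) set" and w +
  fixes P :: "'v \<Rightarrow> 'v \<Rightarrow> real" and s t :: 'v
  assumes P_nonneg: "\<And>i j. P i j \<ge> 0"
    and P_stoch: "\<And>i. (\<Sum>j\<in>UNIV. P i j) = 1"
    and P_edge: "\<And>i j. P i j > 0 \<longleftrightarrow> (i, j) \<in> E"
    and s_ne_t: "s \<noteq> t"
    and reach: "\<exists>xs. is_path E s t xs"
begin

lemma P_eq_0: "(a, b) \<notin> E \<Longrightarrow> P a b = 0"
  using P_edge[of a b] P_nonneg[of a b] by simp

lemma edge_prod_P_nonneg: "0 \<le> edge_prod P xs"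
  by (induction xs rule: induct_list012) (simp_all add: P_nonneg)

lemma edge_prod_P_pos_iff: "0 < edge_prod P xs \<longleftrightarrow> successively (\<lambda>a b. (a, b) \<in> E) xs"
proof (induction xs rule: induct_list012)
  case (3 x y zs)
  moreover have "0 \<le> P x y" "0 \<le> edge_prod P (y # zs)"
    by (rule P_nonneg edge_prod_P_nonneg)+
  ultimately show ?case by (auto simp: P_edge[symmetric] zero_less_mult_iff)
qed simp_all

definition P_TT :: "'v \<Rightarrow> 'v \<Rightarrow> real" where
  "P_TT a b = (if a \<noteq> t \<and> b \<noteq> t then P a b else 0)"

lemma edge_prod_P_TT: "hd xs \<noteq> t \<Longrightarrow> edge_prod P_TT xs = (if t \<in> set xs then 0 else edge_prod P xs)"
  by (induction xs rule: induct_list012) (auto simp: P_TT_def)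

lemma Mtrans_entry: "Mtrans P w t \<alpha> $ a $ b = P_TT a b * \<alpha> powr w a b"
  by (simp add: Mtrans_def Palpha_def P_TT_def)

lemma edge_prod_Mtrans:
  "0 < \<alpha> \<Longrightarrow> edge_prod (\<lambda>a b. Mtrans P w t \<alpha> $ a $ b) xs = edge_prod P_TT xs * \<alpha> powr path_cost w xs"
  by (induction xs rule: induct_list012) (auto simp: Mtrans_entry powr_add)

definition w_min :: real where
  "w_min = Min ((\<lambda>(a, b). w a b) ` E)"

lemma E_nonempty: "E \<noteq> {}"
proof -
  obtain p where "is_path E s t p" using reach by blast
  with s_ne_t obtain x y ys where "p = x # y # ys" "(x, y) \<in> E"
    by (cases p rule: remdups_adj.cases) (auto simp: is_path_def)
  then show ?thesis by blast
qed

lemma w_min_le: "(a, b) \<in> E \<Longrightarrow> w_min \<le> w a b"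
  unfolding w_min_def by (rule Min_le) force+

lemma w_min_pos: "0 < w_min"
proof -
  have "w_min \<in> (\<lambda>(a, b). w a b) ` E"
    unfolding w_min_def using E_nonempty by (intro Min_in) auto
  then show ?thesis using w_pos by auto
qed

lemma substochastic_Mtrans:
  assumes "0 < \<alpha>" "\<alpha> < 1"
  shows "substochastic_matrix (Mtrans P w t \<alpha>) (\<alpha> powr w_min)"
proof
  show "0 \<le> Mtrans P w t \<alpha> $ i $ j" for i j
    by (simp add: Mtrans_entry P_TT_def P_nonneg)
  have "Mtrans P w t \<alpha> $ i $ j \<le> P i j * \<alpha> powr w_min" for i j
  proof (cases "(i, j) \<in> E")
    case True
    then have "\<alpha> powr w i j \<le> \<alpha> powr w_min"
      using assms w_min_le by (intro powr_mono') auto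
    then show ?thesis
      by (auto simp: Mtrans_entry P_TT_def P_nonneg intro: mult_left_mono)
  qed (simp add: Mtrans_entry P_TT_def P_eq_0)
  then have "(\<Sum>j\<in>UNIV. Mtrans P w t \<alpha> $ i $ j) \<le> (\<Sum>j\<in>UNIV. P i j * \<alpha> powr w_min)" for i
    by (intro sum_mono)
  then show "(\<Sum>j\<in>UNIV. Mtrans P w t \<alpha> $ i $ j) \<le> \<alpha> powr w_min" for i
    by (simp add: sum_distrib_right[symmetric] P_stoch)
  show "\<alpha> powr w_min < 1"
    using powr_less_mono2[OF w_min_pos, of \<alpha> 1] assms by simp
qed

definition Fto_trunc :: "nat \<Rightarrow> real \<Rightarrow> 'v \<Rightarrow> 'v \<Rightarrow> real" where
  "Fto_trunc K \<alpha> x y = (\<Sum>k<K. matpow (Mtrans P w t \<alpha>) k) $ x $ y"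

lemma Fto_trunc_vertex_seqs:
  "0 < \<alpha> \<Longrightarrow> Fto_trunc K \<alpha> x y =
    (\<Sum>xs\<in>vertex_seqs_upto K x y. edge_prod P_TT xs * \<alpha> powr path_cost w xs)"
  unfolding Fto_trunc_def sum_matpow_entry by (simp add: edge_prod_Mtrans)

lemma Fto_trunc_error:
  "\<forall>\<^sub>F \<alpha> in at_right 0. \<bar>Fto P w t \<alpha> x y - Fto_trunc K \<alpha> x y\<bar>
     \<le> CARD('v) / (1 - (1/2) powr w_min) * \<alpha> powr (K * w_min)"
proof (rule eventually_mono[OF eventually_at_right_real[of 0 "1/2"]])
  fix \<alpha> :: real assume "\<alpha> \<in> {0<..<1/2}"
  then have \<alpha>: "0 < \<alpha>" "\<alpha> < 1/2" by auto
  \<comment> \<open>for \<alpha> < 1/2 the row sums of M(\<alpha>) stay below (1/2)^w_min < 1, uniformly in \<alpha>\<close>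
  then interpret substochastic_matrix "Mtrans P w t \<alpha>" "\<alpha> powr w_min"
    by (intro substochastic_Mtrans) auto
  have "Fto P w t \<alpha> x y - Fto_trunc K \<alpha> x y
      = (matrix_inv (mat 1 - Mtrans P w t \<alpha>) ** matpow (Mtrans P w t \<alpha>) K) $ x $ y"
    by (subst Fto_def, subst matrix_inv_neumann[OF invertible, of K]) (simp add: Fto_trunc_def)
  also have "\<bar>\<dots>\<bar> \<le> CARD('v) / (1 - \<alpha> powr w_min) * (\<alpha> powr w_min) ^ K"
    by (rule neumann_remainder_bound)
  also have "\<dots> = CARD('v) / (1 - \<alpha> powr w_min) * \<alpha> powr (K * w_min)"
    using \<alpha> by (simp add: powr_realpow[symmetric] powr_powr mult.commute)
  also have "\<dots> \<le> CARD('v) / (1 - (1/2) powr w_min) * \<alpha> powr (K * w_min)"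
  proof (intro mult_right_mono divide_left_mono)
    show "1 - (1/2) powr w_min \<le> 1 - \<alpha> powr w_min"
      using \<alpha> w_min_pos by (simp add: powr_mono2)
    show "0 < (1 - \<alpha> powr w_min) * (1 - (1/2) powr w_min)"
      using less_1 powr_less_mono2[OF w_min_pos, of "1/2" 1] by (intro mult_pos_pos) auto
  qed auto
  finally show "\<bar>Fto P w t \<alpha> x y - Fto_trunc K \<alpha> x y\<bar>
     \<le> CARD('v) / (1 - (1/2) powr w_min) * \<alpha> powr (K * w_min)" .
qed simp

lemma Fto_trunc_error_tendsto:
  "0 < K \<Longrightarrow> ((\<lambda>\<alpha>. Fto P w t \<alpha> x y - Fto_trunc K \<alpha> x y) \<longlongrightarrow> 0) (at_right 0)"
  using w_min_pos by (intro tendsto_0_if_powr_bound[OF _ Fto_trunc_error]) simp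

lemma Fto_trunc_error_scaled_tendsto:
  assumes "d < K * w_min"
  shows "((\<lambda>\<alpha>. \<alpha> powr (-d) * (Fto P w t \<alpha> x y - Fto_trunc K \<alpha> x y)) \<longlongrightarrow> 0) (at_right 0)"
proof (rule tendsto_0_if_powr_bound)
  show "0 < K * w_min - d" using assms by simp
  show "\<forall>\<^sub>F \<alpha> in at_right 0. \<bar>\<alpha> powr (-d) * (Fto P w t \<alpha> x y - Fto_trunc K \<alpha> x y)\<bar>
      \<le> CARD('v) / (1 - (1/2) powr w_min) * \<alpha> powr (K * w_min - d)"
    using Fto_trunc_error[where x = x and y = y and K = K] eventually_at_right_0_pos
  proof eventually_elim
    case (elim \<alpha>)
    have "\<bar>\<alpha> powr (-d) * (Fto P w t \<alpha> x y - Fto_trunc K \<alpha> x y)\<bar>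
        = \<alpha> powr (-d) * \<bar>Fto P w t \<alpha> x y - Fto_trunc K \<alpha> x y\<bar>"
      by (simp add: abs_mult)
    also have "\<dots> \<le> \<alpha> powr (-d) * (CARD('v) / (1 - (1/2) powr w_min) * \<alpha> powr (K * w_min))"
      using elim(1) by (rule mult_left_mono) simp
    also have "\<dots> = CARD('v) / (1 - (1/2) powr w_min) * \<alpha> powr (K * w_min - d)"
      using elim(2) by (simp add: powr_diff powr_minus field_simps)
    finally show ?case .
  qed
qed

lemma Fto_tendsto: "((\<lambda>\<alpha>. Fto P w t \<alpha> x y) \<longlongrightarrow> (if x = y then 1 else 0)) (at_right 0)"
  by (rule Lim_transform[OF _ Fto_trunc_error_tendsto[of 1]]) (simp_all add: Fto_trunc_def mat_def)

lemma Fto_trunc_tendsto: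
  "0 < K \<Longrightarrow> ((\<lambda>\<alpha>. Fto_trunc K \<alpha> x y) \<longlongrightarrow> (if x = y then 1 else 0)) (at_right 0)"
  by (rule Lim_transform2[OF Fto_tendsto Fto_trunc_error_tendsto])

text \<open>A triple (z, xs, ys) stands for the walk xs @ tl ys @ [t]: a vertex sequence from s to m, one
  from m to z, and the final edge z t. These triples index the terms of
  \<Sum>z. T_sm T_mz P_zt(\<alpha>), where T is the truncated Neumann series.\<close>

definition via_seqs :: "nat \<Rightarrow> 'v \<Rightarrow> ('v \<times> 'v list \<times> 'v list) set" where
  "via_seqs K m = Sigma (UNIV - {t}) (\<lambda>z. vertex_seqs_upto K s m \<times> vertex_seqs_upto K m z)"

fun join :: "'v \<times> 'v list \<times> 'v list \<Rightarrow> 'v list" where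
  "join (z, xs, ys) = xs @ tl ys @ [t]"

fun join_coef :: "'v \<times> 'v list \<times> 'v list \<Rightarrow> real" where
  "join_coef (z, xs, ys) = edge_prod P_TT xs * edge_prod P_TT ys * P z t"

lemma finite_via_seqs: "finite (via_seqs K m)"
  unfolding via_seqs_def by (intro finite_SigmaI finite_cartesian_product) (auto simp: finite_vertex_seqs_upto)

lemma via_seqs_join:
  assumes "(z, xs, ys) \<in> via_seqs K m"
  shows "path_cost w (join (z, xs, ys)) = path_cost w xs + path_cost w ys + w z t"
    and "m \<noteq> t \<Longrightarrow>
      join_coef (z, xs, ys) = (if t \<in> set xs \<union> set ys then 0 else edge_prod P (join (z, xs, ys)))"
proof -
  have seqs: "xs \<noteq> []" "ys \<noteq> []" "hd xs = s" "last xs = m" "hd ys = m" "last ys = z" "z \<noteq> t"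
    using assms by (auto simp: via_seqs_def vertex_seqs_upto_def)
  moreover have "last (xs @ tl ys) = z"
    using seqs by (cases ys; cases "tl ys") auto
  ultimately have "edges (join (z, xs, ys)) = edges xs @ edges ys @ [(z, t)]"
    using edges_append_tl[of "xs @ tl ys" "[z, t]"] edges_append_tl[of xs ys] by simp
  then show "path_cost w (join (z, xs, ys)) = path_cost w xs + path_cost w ys + w z t"
    and "m \<noteq> t \<Longrightarrow>
      join_coef (z, xs, ys) = (if t \<in> set xs \<union> set ys then 0 else edge_prod P (join (z, xs, ys)))"
    using seqs s_ne_t by (auto simp: path_cost_edges edge_prod_def[of P] edge_prod_P_TT)
qed

lemma Fto_trunc_product_expansion:
  assumes "0 < \<alpha>"
  shows "(\<Sum>z\<in>UNIV - {t}. Fto_trunc K \<alpha> s m * Fto_trunc K \<alpha> m z * Palpha P w \<alpha> z t)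
    = (\<Sum>i\<in>via_seqs K m. join_coef i * \<alpha> powr path_cost w (join i))"
proof -
  let ?A = "\<lambda>xs. edge_prod P_TT xs * \<alpha> powr path_cost w xs"
  let ?g = "\<lambda>i. join_coef i * \<alpha> powr path_cost w (join i)"
  let ?B = "\<lambda>z. vertex_seqs_upto K s m \<times> vertex_seqs_upto K m z"
  have "Fto_trunc K \<alpha> s m * Fto_trunc K \<alpha> m z * Palpha P w \<alpha> z t = (\<Sum>p\<in>?B z. ?g (z, p))"
    if "z \<in> UNIV - {t}" for z
  proof -
    have "Fto_trunc K \<alpha> s m * Fto_trunc K \<alpha> m z * Palpha P w \<alpha> z t
        = (\<Sum>xs\<in>vertex_seqs_upto K s m. \<Sum>ys\<in>vertex_seqs_upto K m z.
             ?A xs * ?A ys * (P z t * \<alpha> powr w z t))"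
      by (simp add: Fto_trunc_vertex_seqs[OF assms] Palpha_def sum_distrib_left sum_distrib_right mult_ac)
    also have "\<dots> = (\<Sum>(xs, ys)\<in>?B z. ?A xs * ?A ys * (P z t * \<alpha> powr w z t))"
      by (rule sum.cartesian_product)
    also have "\<dots> = (\<Sum>p\<in>?B z. ?g (z, p))"
    proof (rule sum.cong[OF refl])
      fix p assume p: "p \<in> ?B z"
      obtain xs ys where p_eq: "p = (xs, ys)" by (cases p)
      with p that have mem: "(z, xs, ys) \<in> via_seqs K m" by (simp add: via_seqs_def)
      show "(case p of (xs, ys) \<Rightarrow> ?A xs * ?A ys * (P z t * \<alpha> powr w z t)) = ?g (z, p)"
        using via_seqs_join(1)[OF mem] assms p_eq by (simp add: powr_add)
    qed
    finally show ?thesis .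
  qed
  then have "(\<Sum>z\<in>UNIV - {t}. Fto_trunc K \<alpha> s m * Fto_trunc K \<alpha> m z * Palpha P w \<alpha> z t)
      = (\<Sum>z\<in>UNIV - {t}. \<Sum>p\<in>?B z. ?g (z, p))"
    by (rule sum.cong[OF refl])
  also have "\<dots> = (\<Sum>i\<in>via_seqs K m. ?g i)"
    unfolding via_seqs_def by (subst sum.Sigma) (auto simp: finite_vertex_seqs_upto)
  finally show ?thesis .
qed

definition sp_weight :: "('v list \<Rightarrow> bool) \<Rightarrow> real" where
  "sp_weight Q = (\<Sum>p\<in>{p. shortest_path E w s t p \<and> Q p}. edge_prod P p)"

lemma finite_shortest_paths: "finite {p. shortest_path E w s t p \<and> Q p}"
  by (rule finite_subset[OF _ finite_paths[of E s t]]) (auto simp: shortest_path_def)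

lemma edge_prod_shortest_path_pos: "shortest_path E w s t p \<Longrightarrow> 0 < edge_prod P p"
  by (simp add: shortest_path_iff is_walk_def edge_prod_P_pos_iff)

lemma sp_weight_pos_iff: "0 < sp_weight Q \<longleftrightarrow> (\<exists>p. shortest_path E w s t p \<and> Q p)"
proof
  assume pos: "0 < sp_weight Q"
  show "\<exists>p. shortest_path E w s t p \<and> Q p"
  proof (rule ccontr)
    assume "\<not> (\<exists>p. shortest_path E w s t p \<and> Q p)"
    then have "{p. shortest_path E w s t p \<and> Q p} = {}" by blast
    with pos show False by (simp add: sp_weight_def)
  qed
next
  assume "\<exists>p. shortest_path E w s t p \<and> Q p"
  then obtain p where "shortest_path E w s t p" "Q p" by blast
  then show "0 < sp_weight Q"
    unfolding sp_weight_def using edge_prod_shortest_path_pos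
    by (intro sum_pos2[OF finite_shortest_paths, of p]) (auto intro: less_imp_le)
qed

lemma sp_weight_nonneg: "0 \<le> sp_weight Q"
  unfolding sp_weight_def by (intro sum_nonneg) (auto dest: edge_prod_shortest_path_pos)

lemma sp_weight_eq_0_iff: "sp_weight Q = 0 \<longleftrightarrow> \<not> (\<exists>p. shortest_path E w s t p \<and> Q p)"
  unfolding sp_weight_pos_iff[symmetric] using sp_weight_nonneg[of Q] by auto

lemma sp_weight_split: "sp_weight (\<lambda>_. True) = sp_weight Q + sp_weight (\<lambda>p. \<not> Q p)"
proof -
  have "{p. shortest_path E w s t p \<and> True}
      = {p. shortest_path E w s t p \<and> Q p} \<union> {p. shortest_path E w s t p \<and> \<not> Q p}"
    by blast
  then show ?thesis
    unfolding sp_weight_def by (simp add: sum.union_disjoint finite_shortest_paths Int_def)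
qed

lemma sp_weight_all_pos: "0 < sp_weight (\<lambda>_. True)"
  using reach shortest_path_exists by (auto simp: sp_weight_pos_iff is_path_iff_walk)

lemma sp_weight_via_source: "sp_weight (\<lambda>p. s \<in> set p) = sp_weight (\<lambda>_. True)"
proof -
  have "shortest_path E w s t p \<Longrightarrow> s \<in> set p" for p
    by (auto simp: shortest_path_def is_path_def)
  then show ?thesis
    unfolding sp_weight_def by (metis (lifting))
qed

definition split_via :: "'v \<Rightarrow> 'v list \<Rightarrow> 'v \<times> 'v list \<times> 'v list" where
  "split_via m p = (last (butlast p), takeWhile (\<lambda>x. x \<noteq> m) p @ [m], dropWhile (\<lambda>x. x \<noteq> m) (butlast p))"

lemma split_via_eq:
  assumes "m \<notin> set as"
  shows "split_via m (as @ m # cs @ [t]) = (last (m # cs), as @ [m], m # cs)"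
proof -
  have "takeWhile (\<lambda>x. x \<noteq> m) (as @ m # r) = as" "dropWhile (\<lambda>x. x \<noteq> m) (as @ m # r) = m # r" for r
    using assms by (induction as) auto
  then show ?thesis by (simp add: split_via_def butlast_append)
qed

lemma join_walk:
  assumes i: "i \<in> via_seqs K m" and "m \<noteq> t" and nonzero: "join_coef i \<noteq> 0"
  shows "is_walk E s t (join i)" "edge_prod P (join i) = join_coef i"
proof -
  obtain z xs ys where i_eq: "i = (z, xs, ys)" by (cases i)
  have seqs: "xs \<noteq> []" "hd xs = s"
    using i by (auto simp: i_eq via_seqs_def vertex_seqs_upto_def)
  have coef: "join_coef i = edge_prod P (join i)"
    using via_seqs_join(2)[OF i[unfolded i_eq] \<open>m \<noteq> t\<close>] nonzero by (auto simp: i_eq)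
  then have "0 < edge_prod P (join i)"
    using nonzero edge_prod_P_nonneg[of "join i"] by simp
  then show "is_walk E s t (join i)"
    using seqs by (auto simp: is_walk_def edge_prod_P_pos_iff i_eq)
  show "edge_prod P (join i) = join_coef i"
    using coef by simp
qed

lemma join_shortest_path:
  assumes i: "i \<in> via_seqs K m" and "m \<noteq> t" and nonzero: "join_coef i \<noteq> 0"
    and cost: "path_cost w (join i) = sp_dist s t"
  shows "shortest_path E w s t (join i)" "m \<in> set (join i)" "split_via m (join i) = i"
proof -
  obtain z xs ys where i_eq: "i = (z, xs, ys)" by (cases i)
  have seqs: "xs \<noteq> []" "ys \<noteq> []" "last xs = m" "hd ys = m" "last ys = z"
    using i by (auto simp: i_eq via_seqs_def vertex_seqs_upto_def)
  show sp: "shortest_path E w s t (join i)"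
    using join_walk[OF assms(1-3)] cost by (simp add: shortest_path_iff)
  obtain as where xs: "xs = as @ [m]"
    using seqs by (metis append_butlast_last_id)
  obtain cs where ys: "ys = m # cs"
    using seqs by (cases ys) auto
  have join_eq: "join i = as @ m # cs @ [t]"
    by (simp add: i_eq xs ys)
  then show "m \<in> set (join i)" by simp
  have "m \<notin> set as"
    using sp join_eq by (auto simp: shortest_path_def is_path_def)
  then show "split_via m (join i) = i"
    using seqs by (simp add: join_eq split_via_eq i_eq xs ys)
qed

lemma split_via_shortest_path:
  assumes sp: "shortest_path E w s t p" and "m \<in> set p" "m \<noteq> t" "CARD('v) \<le> K"
  shows "split_via m p \<in> via_seqs K m" "join (split_via m p) = p"
    "join_coef (split_via m p) = edge_prod P p"
proof -
  have path: "is_path E s t p"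
    using sp by (simp add: shortest_path_def)
  obtain as bs where p: "p = as @ m # bs"
    using \<open>m \<in> set p\<close> by (meson split_list)
  have "bs \<noteq> []" "last bs = t"
    using path p \<open>m \<noteq> t\<close> by (auto simp: is_path_def)
  then obtain cs where "bs = cs @ [t]"
    by (metis append_butlast_last_id)
  with p have p_eq: "p = as @ m # cs @ [t]" by simp
  have "length p = card (set p)"
    using path by (simp add: is_path_def distinct_card)
  also have "\<dots> \<le> CARD('v)" by (rule card_mono) auto
  finally have len: "length p \<le> K" using \<open>CARD('v) \<le> K\<close> by simp
  have "distinct p" "hd p = s" using path by (auto simp: is_path_def)
  then have fresh: "m \<notin> set as" "t \<notin> set as" "t \<notin> set (m # cs)"
    using p_eq \<open>m \<noteq> t\<close> by auto
  have split: "split_via m p = (last (m # cs), as @ [m], m # cs)"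
    using fresh by (simp add: p_eq split_via_eq)
  have "hd (as @ [m]) = s" using \<open>hd p = s\<close> p_eq by (cases as) auto
  moreover have "last (m # cs) \<noteq> t" using fresh by (metis last_in_set list.distinct(1))
  ultimately show mem: "split_via m p \<in> via_seqs K m"
    using len unfolding split via_seqs_def by (auto simp: vertex_seqs_upto_def p_eq)
  show "join (split_via m p) = p"
    unfolding split by (simp add: p_eq)
  show "join_coef (split_via m p) = edge_prod P p"
    using via_seqs_join(2)[OF mem[unfolded split] \<open>m \<noteq> t\<close>] fresh
    unfolding split by (simp add: p_eq)
qed

lemma sum_join_coef_shortest:
  assumes "m \<noteq> t" "CARD('v) \<le> K"
  shows "(\<Sum>i\<in>{i\<in>via_seqs K m. path_cost w (join i) = sp_dist s t}. join_coef i)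
    = sp_weight (\<lambda>p. m \<in> set p)"
proof -
  have "(\<Sum>i\<in>{i\<in>via_seqs K m. path_cost w (join i) = sp_dist s t}. join_coef i)
      = (\<Sum>i\<in>{i\<in>via_seqs K m. path_cost w (join i) = sp_dist s t \<and> join_coef i \<noteq> 0}. join_coef i)"
    by (rule sum.mono_neutral_right) (auto intro: finite_subset[OF _ finite_via_seqs])
  also have "\<dots> = sp_weight (\<lambda>p. m \<in> set p)"
    unfolding sp_weight_def
  proof (rule sum.reindex_bij_witness[where j = join and i = "split_via m"])
    fix i
    assume "i \<in> {i\<in>via_seqs K m. path_cost w (join i) = sp_dist s t \<and> join_coef i \<noteq> 0}"
    then have "i \<in> via_seqs K m" "join_coef i \<noteq> 0" "path_cost w (join i) = sp_dist s t"
      by auto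
    note join = join_shortest_path[OF this(1) \<open>m \<noteq> t\<close> this(2,3)]
    show "split_via m (join i) = i" by (fact join(3))
    show "join i \<in> {p. shortest_path E w s t p \<and> m \<in> set p}" using join(1,2) by simp
    show "edge_prod P (join i) = join_coef i"
      by (rule join_walk(2)) fact+
  next
    fix p assume "p \<in> {p. shortest_path E w s t p \<and> m \<in> set p}"
    then have sp: "shortest_path E w s t p" and "m \<in> set p" by auto
    note split = split_via_shortest_path[OF this \<open>m \<noteq> t\<close> assms(2)]
    show "join (split_via m p) = p" by (fact split(2))
    show "split_via m p \<in> {i\<in>via_seqs K m. path_cost w (join i) = sp_dist s t \<and> join_coef i \<noteq> 0}"
      using split sp edge_prod_shortest_path_pos[OF sp] by (simp add: shortest_path_iff)
  qed
  finally show ?thesis .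
qed

lemma Palpha_tendsto: "((\<lambda>\<alpha>. Palpha P w \<alpha> z t) \<longlongrightarrow> 0) (at_right 0)"
proof (cases "(z, t) \<in> E")
  case True
  show ?thesis
    unfolding Palpha_def by (rule tendsto_mult_right_zero[OF tendsto_powr_at_right_0[OF w_pos[OF True]]])
qed (simp add: Palpha_def P_eq_0)

lemma scaled_truncated_product_tendsto:
  assumes "m \<noteq> t" "CARD('v) \<le> K"
  shows "((\<lambda>\<alpha>. \<alpha> powr (- sp_dist s t) *
      (\<Sum>z\<in>UNIV - {t}. Fto_trunc K \<alpha> s m * Fto_trunc K \<alpha> m z * Palpha P w \<alpha> z t))
    \<longlongrightarrow> sp_weight (\<lambda>p. m \<in> set p)) (at_right 0)"
proof -
  have "((\<lambda>\<alpha>. \<Sum>i\<in>via_seqs K m. join_coef i * \<alpha> powr (path_cost w (join i) - sp_dist s t))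
      \<longlongrightarrow> sp_weight (\<lambda>p. m \<in> set p)) (at_right 0)"
    unfolding sum_join_coef_shortest[OF assms, symmetric]
    using join_walk(1) sp_dist_le_walk(1) assms(1)
    by (intro tendsto_sum_powr_leading finite_via_seqs) blast
  moreover have "\<forall>\<^sub>F \<alpha> in at_right 0.
      (\<Sum>i\<in>via_seqs K m. join_coef i * \<alpha> powr (path_cost w (join i) - sp_dist s t)) =
      \<alpha> powr (- sp_dist s t) *
        (\<Sum>z\<in>UNIV - {t}. Fto_trunc K \<alpha> s m * Fto_trunc K \<alpha> m z * Palpha P w \<alpha> z t)"
  proof (rule eventually_mono[OF eventually_at_right_0_pos])
    fix \<alpha> :: real assume "0 < \<alpha>"
    then show "(\<Sum>i\<in>via_seqs K m. join_coef i * \<alpha> powr (path_cost w (join i) - sp_dist s t)) =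
      \<alpha> powr (- sp_dist s t) *
        (\<Sum>z\<in>UNIV - {t}. Fto_trunc K \<alpha> s m * Fto_trunc K \<alpha> m z * Palpha P w \<alpha> z t)"
      unfolding Fto_trunc_product_expansion[OF \<open>0 < \<alpha>\<close>]
      by (simp add: sum_distrib_left powr_diff powr_minus divide_inverse mult_ac)
  qed
  ultimately show ?thesis
    by (rule Lim_transform_eventually)
qed

lemma scaled_truncation_error_tendsto:
  assumes "sp_dist s t < K * w_min" "0 < K"
  shows "((\<lambda>\<alpha>. \<alpha> powr (- sp_dist s t) * (Fto P w t \<alpha> s m * Qabs P w t \<alpha> m) -
      \<alpha> powr (- sp_dist s t) *
        (\<Sum>z\<in>UNIV - {t}. Fto_trunc K \<alpha> s m * Fto_trunc K \<alpha> m z * Palpha P w \<alpha> z t))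
    \<longlongrightarrow> 0) (at_right 0)"
proof -
  define R where "R \<alpha> x y = \<alpha> powr (- sp_dist s t) * (Fto P w t \<alpha> x y - Fto_trunc K \<alpha> x y)" for \<alpha> x y
  have "\<alpha> powr (- sp_dist s t) * (Fto P w t \<alpha> s m * (Fto P w t \<alpha> m z * Palpha P w \<alpha> z t))
      - \<alpha> powr (- sp_dist s t) * (Fto_trunc K \<alpha> s m * Fto_trunc K \<alpha> m z * Palpha P w \<alpha> z t)
      = (R \<alpha> s m * Fto P w t \<alpha> m z + Fto_trunc K \<alpha> s m * R \<alpha> m z) * Palpha P w \<alpha> z t" for \<alpha> z
    by (simp add: R_def algebra_simps)
  then have diff: "\<alpha> powr (- sp_dist s t) * (Fto P w t \<alpha> s m * Qabs P w t \<alpha> m) -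
      \<alpha> powr (- sp_dist s t) *
        (\<Sum>z\<in>UNIV - {t}. Fto_trunc K \<alpha> s m * Fto_trunc K \<alpha> m z * Palpha P w \<alpha> z t)
    = (\<Sum>z\<in>UNIV - {t}. (R \<alpha> s m * Fto P w t \<alpha> m z + Fto_trunc K \<alpha> s m * R \<alpha> m z) * Palpha P w \<alpha> z t)"
    for \<alpha>
    by (simp add: Qabs_def sum_distrib_left sum_subtractf[symmetric])
  have "((\<lambda>\<alpha>. \<Sum>z\<in>UNIV - {t}.
        (R \<alpha> s m * Fto P w t \<alpha> m z + Fto_trunc K \<alpha> s m * R \<alpha> m z) * Palpha P w \<alpha> z t)
      \<longlongrightarrow> (\<Sum>z\<in>UNIV - {t}. (0 * (if m = z then 1 else 0) + (if s = m then 1 else 0) * 0) * 0))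
      (at_right 0)"
    unfolding R_def using assms
    by (intro tendsto_sum tendsto_add tendsto_mult Fto_trunc_error_scaled_tendsto
        Fto_tendsto Fto_trunc_tendsto Palpha_tendsto)
  then show ?thesis
    by (simp add: diff)
qed

lemma scaled_Fto_Qabs_tendsto:
  assumes "m \<noteq> t"
  shows "((\<lambda>\<alpha>. \<alpha> powr (- sp_dist s t) * (Fto P w t \<alpha> s m * Qabs P w t \<alpha> m))
    \<longlongrightarrow> sp_weight (\<lambda>p. m \<in> set p)) (at_right 0)"
proof -
  \<comment> \<open>K exceeds the number of vertices, so every simple path is among the truncated series' vertex
    sequences, and K w_min > D, so the truncation error is o(\<alpha>^D)\<close>
  obtain n :: nat where n: "sp_dist s t < n * w_min"
    using ex_less_of_nat_mult[OF w_min_pos] by blast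
  define K where "K = n + CARD('v)"
  have "real n * w_min \<le> K * w_min"
    using w_min_pos by (intro mult_right_mono) (auto simp: K_def)
  with n have "CARD('v) \<le> K" "sp_dist s t < K * w_min" "0 < K"
    by (auto simp: K_def finite_UNIV_card_ge_0)
  then show ?thesis
    using assms by (intro Lim_transform[OF scaled_truncated_product_tendsto scaled_truncation_error_tendsto])
qed

lemma Favoid_tendsto:
  assumes "m \<noteq> t"
  shows "((\<lambda>\<alpha>. Favoid P w t \<alpha> s m)
    \<longlongrightarrow> sp_weight (\<lambda>p. m \<in> set p) / sp_weight (\<lambda>_. True)) (at_right 0)"
proof -
  let ?G = "\<lambda>x \<alpha>. \<alpha> powr (- sp_dist s t) * (Fto P w t \<alpha> s x * Qabs P w t \<alpha> x)"
  have F_ss: "((\<lambda>\<alpha>. Fto P w t \<alpha> s s) \<longlongrightarrow> 1) (at_right 0)"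
    using Fto_tendsto[of s s] by simp
  have "((\<lambda>\<alpha>. ?G s \<alpha> / Fto P w t \<alpha> s s) \<longlongrightarrow> sp_weight (\<lambda>_. True) / 1) (at_right 0)"
    using tendsto_divide[OF scaled_Fto_Qabs_tendsto[OF s_ne_t] F_ss] by (simp add: sp_weight_via_source)
  then have "((\<lambda>\<alpha>. ?G m \<alpha> / (?G s \<alpha> / Fto P w t \<alpha> s s))
      \<longlongrightarrow> sp_weight (\<lambda>p. m \<in> set p) / sp_weight (\<lambda>_. True)) (at_right 0)"
    using tendsto_divide[OF scaled_Fto_Qabs_tendsto[OF assms]] sp_weight_all_pos by simp
  moreover have "\<forall>\<^sub>F \<alpha> in at_right 0. ?G m \<alpha> / (?G s \<alpha> / Fto P w t \<alpha> s s) = Favoid P w t \<alpha> s m"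
    using tendsto_imp_eventually_ne[OF F_ss one_neq_zero] eventually_at_right_0_pos
    by eventually_elim (simp add: Favoid_def)
  ultimately show ?thesis
    by (rule Lim_transform_eventually)
qed

lemma Favoid_tendsto_iff:
  assumes "m \<noteq> t"
  shows "((\<lambda>\<alpha>. Favoid P w t \<alpha> s m) \<longlongrightarrow> L) (at_right 0) \<longleftrightarrow>
    L = sp_weight (\<lambda>p. m \<in> set p) / sp_weight (\<lambda>_. True)"
proof
  assume "((\<lambda>\<alpha>. Favoid P w t \<alpha> s m) \<longlongrightarrow> L) (at_right 0)"
  then show "L = sp_weight (\<lambda>p. m \<in> set p) / sp_weight (\<lambda>_. True)"
    by (rule tendsto_unique[OF trivial_limit_at_right_real _ Favoid_tendsto[OF assms]])
qed (use Favoid_tendsto[OF assms] in simp)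

lemma Favoid_tendsto_0_iff:
  assumes "m \<noteq> t"
  shows "((\<lambda>\<alpha>. Favoid P w t \<alpha> s m) \<longlongrightarrow> 0) (at_right 0) \<longleftrightarrow>
    (\<forall>p. shortest_path E w s t p \<longrightarrow> m \<notin> set p)"
proof -
  have "((\<lambda>\<alpha>. Favoid P w t \<alpha> s m) \<longlongrightarrow> 0) (at_right 0) \<longleftrightarrow> sp_weight (\<lambda>p. m \<in> set p) = 0"
    using Favoid_tendsto_iff[OF assms, of 0] sp_weight_all_pos by auto
  then show ?thesis by (auto simp: sp_weight_eq_0_iff)
qed

lemma Favoid_tendsto_1_iff:
  assumes "m \<noteq> t"
  shows "((\<lambda>\<alpha>. Favoid P w t \<alpha> s m) \<longlongrightarrow> 1) (at_right 0) \<longleftrightarrow>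
    (\<forall>p. shortest_path E w s t p \<longrightarrow> m \<in> set p)"
proof -
  have "((\<lambda>\<alpha>. Favoid P w t \<alpha> s m) \<longlongrightarrow> 1) (at_right 0) \<longleftrightarrow> sp_weight (\<lambda>p. m \<notin> set p) = 0"
    using Favoid_tendsto_iff[OF assms, of 1] sp_weight_all_pos sp_weight_split[of "\<lambda>p. m \<in> set p"]
    by (auto simp: eq_divide_eq)
  then show ?thesis by (auto simp: sp_weight_eq_0_iff)
qed

lemma Favoid_tendsto_strictly_between_iff:
  assumes "m \<noteq> t"
  shows "(\<exists>L. ((\<lambda>\<alpha>. Favoid P w t \<alpha> s m) \<longlongrightarrow> L) (at_right 0) \<and> 0 < L \<and> L < 1) \<longleftrightarrow>
    (\<exists>p. shortest_path E w s t p \<and> m \<in> set p) \<and> (\<exists>p. shortest_path E w s t p \<and> m \<notin> set p)"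
proof -
  have "(\<exists>L. ((\<lambda>\<alpha>. Favoid P w t \<alpha> s m) \<longlongrightarrow> L) (at_right 0) \<and> 0 < L \<and> L < 1) \<longleftrightarrow>
      0 < sp_weight (\<lambda>p. m \<in> set p) / sp_weight (\<lambda>_. True) \<and>
      sp_weight (\<lambda>p. m \<in> set p) / sp_weight (\<lambda>_. True) < 1"
    by (simp add: Favoid_tendsto_iff[OF assms])
  also have "\<dots> \<longleftrightarrow> 0 < sp_weight (\<lambda>p. m \<in> set p) \<and> 0 < sp_weight (\<lambda>p. m \<notin> set p)"
    using sp_weight_all_pos sp_weight_split[of "\<lambda>p. m \<in> set p"]
    by (simp add: zero_less_divide_iff divide_less_eq)
  finally show ?thesis by (simp add: sp_weight_pos_iff)
qed

lemma shortest_path_not_unique_iff_Favoid: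
  "(\<exists>xs ys. shortest_path E w s t xs \<and> shortest_path E w s t ys \<and> xs \<noteq> ys) \<longleftrightarrow>
   (\<exists>m L. m \<noteq> t \<and> ((\<lambda>\<alpha>. Favoid P w t \<alpha> s m) \<longlongrightarrow> L) (at_right 0) \<and> 0 < L \<and> L < 1)"
  unfolding shortest_paths_not_unique_iff using Favoid_tendsto_strictly_between_iff by blast

end

theorem mainTheorem4:
  fixes E :: "('v::finite \<times> 'v) set"
    and P w :: "'v \<Rightarrow> 'v \<Rightarrow> real"
    and s t :: 'v
  assumes P_nonneg: "\<And>i j. P i j \<ge> 0"
    and P_stoch: "\<And>i. (\<Sum>j\<in>UNIV. P i j) = 1"
    and P_edge: "\<And>i j. P i j > 0 \<longleftrightarrow> (i, j) \<in> E"
    and w_pos: "\<And>i j. (i, j) \<in> E \<Longrightarrow> w i j > 0"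
    and st: "s \<noteq> t"
    and reach: "\<exists>xs. is_path E s t xs"
  shows
    "(\<forall>m. m \<noteq> t \<longrightarrow> ((\<lambda>\<alpha>. Favoid P w t \<alpha> s m) \<longlongrightarrow> 0) (at_right 0) \<longrightarrow>
        (\<forall>xs. shortest_path E w s t xs \<longrightarrow> m \<notin> set xs))
   \<and> (\<forall>m. m \<noteq> t \<longrightarrow> ((\<lambda>\<alpha>. Favoid P w t \<alpha> s m) \<longlongrightarrow> 1) (at_right 0) \<longrightarrow>
        (\<forall>xs. shortest_path E w s t xs \<longrightarrow> m \<in> set xs))
   \<and> (\<forall>m L. m \<noteq> t \<longrightarrow> ((\<lambda>\<alpha>. Favoid P w t \<alpha> s m) \<longlongrightarrow> L) (at_right 0) \<longrightarrow> 0 < L \<longrightarrow> L < 1 \<longrightarrow>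
        (\<exists>xs. shortest_path E w s t xs \<and> m \<in> set xs) \<and>
        (\<exists>xs. shortest_path E w s t xs \<and> m \<notin> set xs))
   \<and> ((\<exists>xs ys. shortest_path E w s t xs \<and> shortest_path E w s t ys \<and> xs \<noteq> ys) \<longleftrightarrow>
      (\<exists>m L. m \<noteq> t \<and> ((\<lambda>\<alpha>. Favoid P w t \<alpha> s m) \<longlongrightarrow> L) (at_right 0) \<and> 0 < L \<and> L < 1))"
proof -
  interpret evaporating_network E w P s t
    by unfold_locales (use assms in auto)
  show ?thesis
    unfolding shortest_path_not_unique_iff_Favoid
    using Favoid_tendsto_strictly_between_iff by (auto simp: Favoid_tendsto_0_iff Favoid_tendsto_1_iff)
qed

end
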